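(* Let $\mathbf{L}$ be a real symmetric $N\times N$ matrix with $\|\mathbf{L}\|\le \varrho$, with orthonormal eigenvectors $\boldsymbol{\phi}_1,\dots,\boldsymbol{\phi}_N$ and eigenvalues $\lambda_1,\dots,\lambda_N$. Let $\psi\neq 0,\varphi,c\in\mathbb{C}$, let $\mathbf{x}\in\mathbb{C}^N$ be a fixed input, and consider the ARMA$_1$ recursion $$\mathbf{y}_{t+1}=\psi\mathbf{L}\mathbf{y}_t+\varphi\mathbf{x},\qquad \mathbf{z}_{t+1}=\mathbf{y}_{t+1}+c\,\mathbf{x},$$ with arbitrary initial condition $\mathbf{y}_0$. Set $r=-\varphi/\psi$ and $p=1/\psi$. Then the frequency response of this recursion is $$H(\lambda)=c+\frac{r}{\lambda-p},\qquad\text{subject to } |p|>\varrho,$$ that is, when $|p|>\varrho$, $\mathbf{z}_t$ converges, linearly and irrespective of $\mathbf{y}_0$ and of $\mathbf{L}$, to $\sum_{n=1}^N H(\lambda_n)\langle \mathbf{x},\boldsymbol{\phi}_n\rangle\boldsymbol{\phi}_n$.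
   Context: $\mathbf{L}$ is a graph representation matrix (e.g. a possibly shifted Laplacian) of an undirected graph: symmetric and local ($L_{ij}=0$ for $i\neq j$ non-adjacent). All matrices $\mathbf{L}$ considered have eigenvalues in $[\lambda_{\min},\lambda_{\max}]$ and $\varrho=\max\{|\lambda_{\min}|,|\lambda_{\max}|\}$ bounds their spectral norm. The frequency response $H$ of a recursion is the function such that the steady-state output equals $\sum_n H(\lambda_n)\langle\mathbf{x},\boldsymbol{\phi}_n\rangle\boldsymbol{\phi}_n$. Linear convergence means convergence to the limit exponentially fast in $t$. *)

theory Defs
  imports "HOL-Analysis.Analysis"
begin

definition cmatvec :: "real^'n^'m \<Rightarrow> complex^'n \<Rightarrow> complex^'m" where
  "cmatvec L v = (\<chi> i. \<Sum>j\<in>UNIV. complex_of_real (L$i$j) * v$j)"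

definition cinner_real :: "complex^'n \<Rightarrow> real^'n \<Rightarrow> complex" where
  "cinner_real x phi = (\<Sum>i\<in>UNIV. x$i * cnj (complex_of_real (phi$i)))"

definition cvec :: "real^'n \<Rightarrow> complex^'n" where
  "cvec v = (\<chi> i. complex_of_real (v$i))"

definition arma1_H :: "complex \<Rightarrow> complex \<Rightarrow> complex \<Rightarrow> real \<Rightarrow> complex" where
  "arma1_H c r p lam = c + r / (complex_of_real lam - p)"

end

theory Submission
  imports Defs
begin

text \<open>In the eigenbasis of \<open>L\<close> the recursion decouples into the scalar recursions
  \<open>a\<^sub>n(t+1) = \<psi>\<lambda>\<^sub>n a\<^sub>n(t) + \<phi>x\<^sub>n\<close>. Since \<open>|\<psi>\<lambda>\<^sub>n| \<le> |\<psi>|\<rho> < 1\<close>, each of them converges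
  geometrically to its fixed point \<open>\<phi>x\<^sub>n/(1 - \<psi>\<lambda>\<^sub>n)\<close>, and adding \<open>c x\<^sub>n\<close> turns this into
  \<open>H(\<lambda>\<^sub>n) x\<^sub>n\<close> with \<open>r = -\<phi>/\<psi>\<close>, \<open>p = 1/\<psi>\<close>. Reassembling the finitely many modes gives
  the limit together with the common rate \<open>|\<psi>|\<rho>\<close>.\<close>

lemma orthonormal_family_complete:
  fixes phi :: "'n \<Rightarrow> real^'n"
  assumes "\<And>i j. phi i \<bullet> phi j = (if i = j then 1 else 0)"
  shows "(\<Sum>n\<in>UNIV. phi n $ i * phi n $ j) = (if i = j then 1 else 0)"
proof -
  define P :: "real^'n^'n" where "P = (\<chi> n i. phi n $ i)"
  have "P ** transpose P = mat 1"
    using assms by (simp add: P_def matrix_matrix_mult_def transpose_def mat_def vec_eq_iff inner_vec_def)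
  then have "transpose P ** P = mat 1"
    using matrix_left_right_inverse by blast
  then have "(transpose P ** P) $ i $ j = mat 1 $ i $ j"
    by simp
  then show ?thesis
    by (simp add: P_def matrix_matrix_mult_def transpose_def mat_def)
qed

lemma cvec_orthonormal_expansion:
  fixes phi :: "'n \<Rightarrow> real^'n" and v :: "complex^'n"
  assumes "\<And>i j. phi i \<bullet> phi j = (if i = j then 1 else 0)"
  shows "v = (\<Sum>n\<in>UNIV. cinner_real v (phi n) *s cvec (phi n))"
proof (subst vec_eq_iff, rule allI)
  fix k
  have "(\<Sum>n\<in>UNIV. cinner_real v (phi n) *s cvec (phi n)) $ k
      = (\<Sum>n\<in>UNIV. \<Sum>i\<in>UNIV. v$i * complex_of_real (phi n $ i * phi n $ k))"
    by (simp add: cinner_real_def cvec_def sum_distrib_right mult.assoc)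
  also have "\<dots> = (\<Sum>i\<in>UNIV. v$i * complex_of_real (\<Sum>n\<in>UNIV. phi n $ i * phi n $ k))"
    by (subst sum.swap) (simp add: sum_distrib_left)
  also have "\<dots> = v $ k"
    by (simp add: orthonormal_family_complete[OF assms] if_distrib cong: if_cong)
  finally show "v $ k = (\<Sum>n\<in>UNIV. cinner_real v (phi n) *s cvec (phi n)) $ k"
    by simp
qed

lemma cinner_real_add: "cinner_real (u + w) p = cinner_real u p + cinner_real w p"
  by (simp add: cinner_real_def sum.distrib algebra_simps)

lemma cinner_real_smult: "cinner_real (a *s u) p = a * cinner_real u p"
  by (simp add: cinner_real_def sum_distrib_left algebra_simps)

lemma cinner_real_cmatvec_eigenvector:
  fixes L :: "real^'n^'n" and v :: "complex^'n"
  assumes symm: "transpose L = L" and eigen: "L *v p = l *\<^sub>R p"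
  shows "cinner_real (cmatvec L v) p = l * cinner_real v p"
proof -
  have sym: "L$i$j = L$j$i" for i j
    using arg_cong[OF symm, of "\<lambda>M. M$i$j"] by (simp add: transpose_def)
  have row: "(\<Sum>i\<in>UNIV. L$j$i * p$i) = l * p$j" for j
    using arg_cong[OF eigen, of "\<lambda>w. w$j"] by (simp add: matrix_vector_mult_def)
  have "cinner_real (cmatvec L v) p = (\<Sum>i\<in>UNIV. \<Sum>j\<in>UNIV. v$j * complex_of_real (L$i$j * p$i))"
    by (simp add: cinner_real_def cmatvec_def sum_distrib_left mult_ac)
  also have "\<dots> = (\<Sum>j\<in>UNIV. v$j * complex_of_real (\<Sum>i\<in>UNIV. L$j$i * p$i))"
    by (subst sum.swap) (simp add: sum_distrib_left sym)
  also have "\<dots> = (\<Sum>j\<in>UNIV. v$j * complex_of_real (l * p$j))"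
    by (simp only: row)
  also have "\<dots> = l * cinner_real v p"
    by (simp add: cinner_real_def sum_distrib_left mult_ac)
  finally show ?thesis .
qed

lemma norm_vector_smult: "norm (a *s (v :: complex^'n)) = cmod a * norm v"
  unfolding norm_vec_def by (simp add: norm_mult L2_set_right_distrib)

lemma norm_cvec [simp]: "norm (cvec v) = norm v"
  by (simp add: norm_vec_def cvec_def)

lemma abs_eigenvalue_le_onorm:
  fixes L :: "real^'n^'n"
  assumes "L *v v = l *\<^sub>R v" and "norm v = 1"
  shows "\<bar>l\<bar> \<le> onorm (\<lambda>v. L *v v)"
  using onorm[of "\<lambda>v. L *v v" v] assms by simp

lemma affine_recurrence_closed_form:
  fixes a :: "nat \<Rightarrow> 'a::field"
  assumes step: "\<And>t. a (Suc t) = \<mu> * a t + b" and "\<mu> \<noteq> 1"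
  shows "a t - b / (1 - \<mu>) = \<mu> ^ t * (a 0 - b / (1 - \<mu>))"
proof -
  define s where "s = b / (1 - \<mu>)"
  have "b = (1 - \<mu>) * s"
    using \<open>\<mu> \<noteq> 1\<close> by (simp add: s_def)
  then have "a (Suc t) - s = \<mu> * (a t - s)" for t
    by (simp add: step algebra_simps)
  then show ?thesis
    unfolding s_def[symmetric] by (induction t) simp_all
qed

lemma arma1_H_eq_fixed_point:
  assumes "\<psi> \<noteq> 0" and "1 - \<psi> * complex_of_real l \<noteq> 0"
  shows "arma1_H c (- \<phi> / \<psi>) (1 / \<psi>) l = c + \<phi> / (1 - \<psi> * complex_of_real l)"
proof -
  have "complex_of_real l - 1 / \<psi> \<noteq> 0"
    using assms by (auto simp: field_simps)
  then show ?thesis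
    using assms by (simp add: arma1_H_def field_simps)
qed

lemma linear_convergence_from_Suc:
  fixes f :: "nat \<Rightarrow> 'a::real_normed_vector"
  assumes "0 \<le> C" "0 \<le> q" "q < 1" and bound: "\<And>t. norm (f (Suc t) - l) \<le> C * q ^ Suc t"
  shows "f \<longlonglongrightarrow> l \<and> (\<exists>C q. 0 \<le> q \<and> q < 1 \<and> (\<forall>t. norm (f t - l) \<le> C * q ^ t))"
proof -
  define C' where "C' = norm (f 0 - l) + C"
  have bound': "norm (f t - l) \<le> C' * q ^ t" for t
  proof (cases t)
    case (Suc s)
    have "C * q ^ t \<le> C' * q ^ t"
      using assms by (intro mult_right_mono) (simp_all add: C'_def)
    then show ?thesis
      using bound[of s] Suc by simp
  qed (simp add: C'_def \<open>0 \<le> C\<close>)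
  have "(\<lambda>t. C' * q ^ t) \<longlonglongrightarrow> 0"
    using assms by (simp add: LIMSEQ_power_zero tendsto_mult_right_zero)
  then have "(\<lambda>t. f t - l) \<longlonglongrightarrow> 0"
    by (rule Lim_null_comparison[rotated]) (simp add: bound')
  then show ?thesis
    using bound' assms by (auto simp: LIM_zero_cancel)
qed

lemma norm_geometric_modal_sum_le:
  fixes w :: "'n \<Rightarrow> complex^'m"
  assumes "\<And>n. cmod (\<mu> n) \<le> q" and "\<And>n. norm (w n) = 1"
  shows "norm (\<Sum>n\<in>A. (\<mu> n ^ t * d n) *s w n) \<le> (\<Sum>n\<in>A. cmod (d n)) * q ^ t"
proof -
  have "norm (\<Sum>n\<in>A. (\<mu> n ^ t * d n) *s w n) \<le> (\<Sum>n\<in>A. cmod (\<mu> n) ^ t * cmod (d n))"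
    using norm_sum[of "\<lambda>n. (\<mu> n ^ t * d n) *s w n" A]
    by (simp add: norm_vector_smult norm_mult norm_power assms(2))
  also have "\<dots> \<le> (\<Sum>n\<in>A. q ^ t * cmod (d n))"
    by (intro sum_mono mult_right_mono power_mono assms(1)) auto
  finally show ?thesis
    by (simp add: sum_distrib_left mult.commute)
qed

lemma arma1_mode_error:
  fixes L :: "real^'n^'n" and y z :: "nat \<Rightarrow> complex^'n"
  assumes "transpose L = L" and "L *v v = l *\<^sub>R v"
    and "\<psi> \<noteq> 0" and off_pole: "\<psi> * complex_of_real l \<noteq> 1"
    and rec_y: "\<And>t. y (Suc t) = \<psi> *s cmatvec L (y t) + \<phi> *s x"
    and rec_z: "\<And>t. z (Suc t) = y (Suc t) + c *s x"
  shows "cinner_real (z (Suc t)) v - arma1_H c (- \<phi> / \<psi>) (1 / \<psi>) l * cinner_real x v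
    = (\<psi> * complex_of_real l) ^ Suc t
      * (cinner_real (y 0) v - \<phi> * cinner_real x v / (1 - \<psi> * complex_of_real l))"
proof -
  define \<mu> where "\<mu> = \<psi> * complex_of_real l"
  define b where "b = \<phi> * cinner_real x v"
  have "\<mu> \<noteq> 1"
    using off_pole by (simp add: \<mu>_def)
  have "cinner_real (y (Suc s)) v = \<mu> * cinner_real (y s) v + b" for s
    by (simp add: rec_y cinner_real_add cinner_real_smult
        cinner_real_cmatvec_eigenvector[OF assms(1,2)] \<mu>_def b_def)
  from affine_recurrence_closed_form[of "\<lambda>s. cinner_real (y s) v", OF this \<open>\<mu> \<noteq> 1\<close>]
  have "cinner_real (y (Suc t)) v - b / (1 - \<mu>) = \<mu> ^ Suc t * (cinner_real (y 0) v - b / (1 - \<mu>))" .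
  moreover have "arma1_H c (- \<phi> / \<psi>) (1 / \<psi>) l = c + \<phi> / (1 - \<mu>)"
    using off_pole unfolding \<mu>_def by (intro arma1_H_eq_fixed_point \<open>\<psi> \<noteq> 0\<close>) simp
  then have "cinner_real (z (Suc t)) v - arma1_H c (- \<phi> / \<psi>) (1 / \<psi>) l * cinner_real x v
      = cinner_real (y (Suc t)) v - b / (1 - \<mu>)"
    by (simp add: rec_z cinner_real_add cinner_real_smult b_def ring_distribs)
  ultimately show ?thesis
    unfolding \<mu>_def b_def by simp
qed

theorem theorem1:
  fixes L :: "real^'n^'n" and \<rho> :: real
    and phi :: "'n \<Rightarrow> real^'n" and lam :: "'n \<Rightarrow> real"
    and \<psi> \<phi> c :: complex and x :: "complex^'n"
    and y z :: "nat \<Rightarrow> complex^'n"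
  assumes symm: "transpose L = L"
    and norm_bound: "onorm (\<lambda>v. L *v v) \<le> \<rho>"
    and orthonormal: "\<And>i j. phi i \<bullet> phi j = (if i = j then 1 else 0)"
    and eigen: "\<And>i. L *v phi i = lam i *\<^sub>R phi i"
    and psi_nz: "\<psi> \<noteq> 0"
    and rec_y: "\<And>t. y (Suc t) = \<psi> *s cmatvec L (y t) + \<phi> *s x"
    and rec_z: "\<And>t. z (Suc t) = y (Suc t) + c *s x"
    and pole: "cmod (1 / \<psi>) > \<rho>"
  shows "let r = - \<phi> / \<psi>; p = 1 / \<psi>;
             lim = (\<Sum>n\<in>UNIV. (arma1_H c r p (lam n) * cinner_real x (phi n)) *s cvec (phi n))
         in z \<longlonglongrightarrow> lim \<and>
            (\<exists>C q. 0 \<le> q \<and> q < 1 \<and> (\<forall>t. norm (z t - lim) \<le> C * q ^ t))"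
proof -
  define H where "H l = arma1_H c (- \<phi> / \<psi>) (1 / \<psi>) l" for l
  define lim where "lim = (\<Sum>n\<in>UNIV. (H (lam n) * cinner_real x (phi n)) *s cvec (phi n))"
  define \<mu> where "\<mu> n = \<psi> * complex_of_real (lam n)" for n
  define d where "d n = cinner_real (y 0) (phi n) - \<phi> * cinner_real x (phi n) / (1 - \<mu> n)" for n
  define q where "q = cmod \<psi> * \<rho>"
  have unit: "norm (phi n) = 1" for n
    using orthonormal[of n n] by (simp add: norm_eq_1)
  have "0 \<le> q" and "q < 1"
    using onorm_pos_le[of "\<lambda>v. L *v v"] norm_bound pole psi_nz
    by (simp_all add: q_def norm_divide field_simps)
  have mu_le: "cmod (\<mu> n) \<le> q" for n
    using order_trans[OF abs_eigenvalue_le_onorm[OF eigen unit] norm_bound]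
    by (simp add: \<mu>_def q_def norm_mult mult_left_mono)
  have mode: "cinner_real (z (Suc t)) (phi n) - H (lam n) * cinner_real x (phi n)
      = \<mu> n ^ Suc t * d n" for n t
  proof -
    have "\<psi> * complex_of_real (lam n) \<noteq> 1"
      using mu_le[of n] \<open>q < 1\<close> by (auto simp: \<mu>_def)
    from arma1_mode_error[where y = y and z = z, OF symm eigen[of n] psi_nz this rec_y rec_z]
    show ?thesis
      unfolding H_def \<mu>_def d_def .
  qed
  have expansion: "z (Suc t) - lim = (\<Sum>n\<in>UNIV. (cinner_real (z (Suc t)) (phi n)
      - H (lam n) * cinner_real x (phi n)) *s cvec (phi n))" for t
    by (subst cvec_orthonormal_expansion[OF orthonormal, of "z (Suc t)"])
      (simp add: lim_def sum_subtractf vector_sub_rdistrib)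
  \<comment> \<open>\<open>z 0\<close> is not tied to the recursion, so the geometric bound starts at \<open>t = 1\<close>.\<close>
  have "norm (z (Suc t) - lim) \<le> (\<Sum>n\<in>UNIV. cmod (d n)) * q ^ Suc t" for t
    unfolding expansion mode by (rule norm_geometric_modal_sum_le[OF mu_le]) (simp add: unit)
  from linear_convergence_from_Suc[OF _ \<open>0 \<le> q\<close> \<open>q < 1\<close> this]
  show ?thesis
    by (simp add: Let_def H_def lim_def sum_nonneg)
qed

end
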